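(* Let $\mathcal A_+,\mathcal A_-\subseteq\mathbb R^n$ be disjoint finite sets such that $(\mathcal A_+,\mathcal A_-)$ is nonseparable of dimension $d$, and let $D\in\mathcal F_d(\mathcal A_+)$ with $\mathcal A_-\subseteq D$. Then the following are equivalent: (i) there is a facet $\Gamma_D$ of $D$ with $\mathcal A_-\subseteq\Gamma_D$; (ii) there exist $\Delta\in\Lambda(\mathcal A_+,D)$ and a facet $\Gamma_\Delta$ of $\Delta$ with $\mathcal A_-\subseteq\Gamma_\Delta$.
   Context: For disjoint finite sets $\mathcal A_+,\mathcal A_-\subseteq\mathbb R^n$, the dimension of $(\mathcal A_+,\mathcal A_-)$ is $\dim\operatorname{conv}(\mathcal A_+\cup\mathcal A_-)$. Let $d$ be this dimension. $\mathcal F(\mathcal A_+)$ denotes the common refinement of all regular polyhedral subdivisions of the point configuration $\mathcal A_+$ (the complex of all intersections $G_1\cap\dots\cap G_k$ with $G_i$ a cell of the $i$-th subdivision), and $\mathcal F_d(\mathcal A_+)$ its $d$-dimensional cells. $(\mathcal A_+,\mathcal A_-)$ is nonseparable if $\mathcal A_-\subseteq\operatorname{relint}(\operatorname{conv}(\mathcal A_+))$ and there is $D\in\mathcal F_d(\mathcal A_+)$ with $\mathcal A_-\subseteq D$. For such $D$, $\Lambda(\mathcal A_+,D)$ is the set of $d$-dimensional simplices $\Delta$ with vertices in $\mathcal A_+$ such that $\operatorname{relint}(D)\subseteq\operatorname{relint}(\Delta)$. *)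

theory Defs
  imports "HOL-Analysis.Analysis"
begin

definition pair_dim :: "'a::euclidean_space set \<Rightarrow> 'a set \<Rightarrow> int" where
  "pair_dim Ap Am = aff_dim (convex hull (Ap \<union> Am))"

text \<open>Cells of the regular subdivision of the point configuration A induced by the
  height function h: projections of the (nonempty) lower faces of the lifted polytope
  conv (a, h a). A lower face is cut out by a linear functional (w,1) attaining its
  minimum beta over the lifted points; its projection is the convex hull of the points
  of A whose lifts lie on it.\<close>
definition reg_cell :: "'a::euclidean_space set \<Rightarrow> ('a \<Rightarrow> real) \<Rightarrow> 'a set \<Rightarrow> bool" where
  "reg_cell A h C \<longleftrightarrow>
     (\<exists>w \<beta>. (\<forall>a\<in>A. \<beta> \<le> h a + w \<bullet> a) \<and> {a\<in>A. h a + w \<bullet> a = \<beta>} \<noteq> {} \<and>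
            C = convex hull {a\<in>A. h a + w \<bullet> a = \<beta>})"

text \<open>F(A): common refinement of all regular subdivisions of A: all (nonempty) intersections
  of a choice of one cell from each regular subdivision (indexed by height functions).\<close>
definition refinement_cells :: "'a::euclidean_space set \<Rightarrow> 'a set set" where
  "refinement_cells A =
     {C. C \<noteq> {} \<and> (\<exists>G. (\<forall>h. reg_cell A h (G h)) \<and> C = \<Inter> (range G))}"

definition Fd :: "'a::euclidean_space set \<Rightarrow> int \<Rightarrow> 'a set set" where
  "Fd A d = {C \<in> refinement_cells A. aff_dim C = d}"

definition nonseparable :: "'a::euclidean_space set \<Rightarrow> 'a set \<Rightarrow> bool" where
  "nonseparable Ap Am \<longleftrightarrow>
     Am \<subseteq> rel_interior (convex hull Ap) \<and> (\<exists>D \<in> Fd Ap (pair_dim Ap Am). Am \<subseteq> D)"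

definition Lambda :: "'a::euclidean_space set \<Rightarrow> 'a set \<Rightarrow> int \<Rightarrow> 'a set set" where
  "Lambda Ap D d =
     {\<Delta>. (\<exists>C. C \<subseteq> Ap \<and> \<not> affine_dependent C \<and> int (card C) = d + 1 \<and> \<Delta> = convex hull C)
          \<and> rel_interior D \<subseteq> rel_interior \<Delta>}"

end

theory Submission
  imports Defs "HOL-Computational_Algebra.Polynomial"
begin

(* (ii) implies (i): D and the simplex Delta have the same dimension and nested relative
   interiors, so D lies in Delta and the hyperplane supporting the facet of Delta cuts D in a
   proper face containing A_-, which lies in a facet of D.
   (i) implies (ii): a relative interior point of the facet Gamma of D, the intersection of one
   cell from every regular subdivision, lies on the relative boundary of one of these cells G,
   say for the heights h0; hence Gamma lies in a facet of G. Perturbing h0 by a small multiple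
   of generic heights gives a regular triangulation whose cell containing D is a simplex Delta
   spanned by vertices of G. The hyperplane supporting that facet of G cuts out a facet of Delta
   containing Gamma. *)

lemma sum_mult_affine:
  fixes w :: "'a::real_inner"
  shows "(\<Sum>a\<in>T. u a * (f a + w \<bullet> a + c)) =
    (\<Sum>a\<in>T. u a * f a) + w \<bullet> (\<Sum>a\<in>T. u a *\<^sub>R a) + sum u T * c"
  by (simp add: distrib_left sum.distrib inner_sum_right sum_distrib_right)

lemma exists_nonvanishing_combinations:
  fixes A :: "'a set" and \<U> :: "('a \<Rightarrow> real) set"
  assumes "finite A" "finite \<U>" "\<And>U. U \<in> \<U> \<Longrightarrow> \<exists>a\<in>A. U a \<noteq> 0"
  shows "\<exists>g. \<forall>U\<in>\<U>. (\<Sum>a\<in>A. U a * g a) \<noteq> 0"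
proof -
  obtain idx :: "'a \<Rightarrow> nat" where idx: "inj_on idx A"
    using finite_imp_inj_to_nat_seg[OF assms(1)] by blast
  define p :: "('a \<Rightarrow> real) \<Rightarrow> real poly"
    where "p U = (\<Sum>a\<in>A. monom (U a) (idx a))" for U
  have poly_p: "poly (p U) s = (\<Sum>a\<in>A. U a * s ^ idx a)" for U s
    unfolding p_def by (simp add: poly_sum poly_monom)
  have "p U \<noteq> 0" if U: "U \<in> \<U>" for U
  proof -
    obtain a where a: "a \<in> A" "U a \<noteq> 0" using assms(3)[OF U] by blast
    have "coeff (p U) (idx a) = (\<Sum>b\<in>A. if b = a then U b else 0)"
      unfolding p_def coeff_sum using idx a(1) by (intro sum.cong) (auto simp: inj_on_eq_iff)
    then show ?thesis using a assms(1) by auto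
  qed
  then have "finite (\<Union>U\<in>\<U>. {s. poly (p U) s = 0})"
    using assms(2) poly_roots_finite by blast
  then obtain s :: real where s: "s \<notin> (\<Union>U\<in>\<U>. {s. poly (p U) s = 0})"
    using ex_new_if_finite[OF infinite_UNIV_char_0] by blast
  then have "\<forall>U\<in>\<U>. (\<Sum>a\<in>A. U a * s ^ idx a) \<noteq> 0" by (simp add: poly_p)
  then show ?thesis by (intro exI[of _ "\<lambda>a. s ^ idx a"])
qed

lemma exists_generic_height:
  fixes A :: "'a::real_inner set"
  assumes "finite A"
  obtains g :: "'a \<Rightarrow> real"
  where "\<And>T w \<beta>. T \<subseteq> A \<Longrightarrow> \<forall>a\<in>T. g a + w \<bullet> a = \<beta> \<Longrightarrow> \<not> affine_dependent T"
proof -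
  define \<T> where "\<T> = {T. T \<subseteq> A \<and> affine_dependent T}"
  have "\<exists>U. sum U T = 0 \<and> (\<exists>v\<in>T. U v \<noteq> 0) \<and> (\<Sum>v\<in>T. U v *\<^sub>R v) = 0" if "T \<in> \<T>" for T
    using that assms affine_dependent_explicit_finite finite_subset unfolding \<T>_def by blast
  then obtain U where U: "\<And>T. T \<in> \<T> \<Longrightarrow>
      sum (U T) T = 0 \<and> (\<exists>v\<in>T. U T v \<noteq> 0) \<and> (\<Sum>v\<in>T. U T v *\<^sub>R v) = 0"
    by metis
  define U' where "U' T a = (if a \<in> T then U T a else 0)" for T a
  have fin: "finite (U' ` \<T>)" using assms unfolding \<T>_def by simp
  have nz: "\<exists>a\<in>A. V a \<noteq> 0" if V: "V \<in> U' ` \<T>" for V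
  proof -
    obtain T where T: "T \<in> \<T>" "V = U' T" using V by blast
    then obtain v where "v \<in> T" "U T v \<noteq> 0" using U by blast
    then show ?thesis using T unfolding U'_def \<T>_def by auto
  qed
  obtain g where g: "\<And>U. U \<in> U' ` \<T> \<Longrightarrow> (\<Sum>a\<in>A. U a * g a) \<noteq> 0"
    using exists_nonvanishing_combinations[OF assms fin nz] by blast
  show ?thesis
  proof (rule that, rule notI)
    fix T w \<beta> assume T: "T \<subseteq> A" "\<forall>a\<in>T. g a + w \<bullet> a = \<beta>" "affine_dependent T"
    then have "T \<in> \<T>" unfolding \<T>_def by blast
    have "(\<Sum>a\<in>A. U' T a * g a) = (\<Sum>a\<in>A. if a \<in> T then U T a * g a else 0)"
      unfolding U'_def by (rule sum.cong) auto
    also have "\<dots> = (\<Sum>a\<in>T. U T a * g a)"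
      using T(1) assms by (simp add: sum.inter_restrict[symmetric] Int_absorb1)
    also have "\<dots> = (\<Sum>a\<in>T. U T a * (g a + w \<bullet> a + - \<beta>))"
      unfolding sum_mult_affine using U[OF \<open>T \<in> \<T>\<close>] by simp
    also have "\<dots> = 0"
      using T(2) by simp
    finally show False using g[OF imageI, OF \<open>T \<in> \<T>\<close>] by contradiction
  qed
qed

lemma reg_cell_convex_hull:
  assumes "reg_cell A h C"
  obtains T where "T \<subseteq> A" "C = convex hull T"
proof -
  obtain w \<beta> where "C = convex hull {a\<in>A. h a + w \<bullet> a = \<beta>}"
    using assms unfolding reg_cell_def by blast
  then show ?thesis by (intro that[of "{a\<in>A. h a + w \<bullet> a = \<beta>}"]) auto
qed

lemma reg_cell_subset_convex_hull: "reg_cell A h C \<Longrightarrow> C \<subseteq> convex hull A"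
  by (elim reg_cell_convex_hull) (simp add: hull_mono)

lemma polyhedron_reg_cell: "finite A \<Longrightarrow> reg_cell A h C \<Longrightarrow> polyhedron C"
  by (elim reg_cell_convex_hull) (simp add: polyhedron_convex_hull finite_subset)

lemma finite_range_reg_cells:
  assumes "finite A" "\<And>h. reg_cell A h (G h)"
  shows "finite (range G)"
proof (rule finite_subset)
  show "range G \<subseteq> (\<lambda>T. convex hull T) ` Pow A"
  proof (rule image_subsetI)
    fix h
    obtain T where "T \<subseteq> A" "G h = convex hull T"
      using assms(2)[of h] by (rule reg_cell_convex_hull)
    then show "G h \<in> (\<lambda>T. convex hull T) ` Pow A" by blast
  qed
  show "finite ((\<lambda>T. convex hull T) ` Pow A)" using assms(1) by simp
qed

lemma refinement_cellE:
  assumes "D \<in> refinement_cells A"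
  obtains G where "\<And>h. reg_cell A h (G h)" "D = \<Inter>(range G)" "D \<noteq> {}"
  using assms unfolding refinement_cells_def by blast

lemma refinement_cell_subset_convex_hull:
  assumes "D \<in> refinement_cells A"
  shows "D \<subseteq> convex hull A"
proof -
  obtain G where "\<And>h. reg_cell A h (G h)" "D = \<Inter>(range G)"
    using assms by (blast elim: refinement_cellE)
  then show ?thesis using reg_cell_subset_convex_hull by blast
qed

lemma polyhedron_refinement_cell:
  assumes "finite A" "D \<in> refinement_cells A"
  shows "polyhedron D"
proof -
  obtain G where G: "\<And>h. reg_cell A h (G h)" "D = \<Inter>(range G)"
    using assms(2) by (blast elim: refinement_cellE)
  have "finite (range G)" using assms(1) G(1) by (rule finite_range_reg_cells)
  then show ?thesis
    unfolding G(2) using G(1) polyhedron_reg_cell[OF assms(1)] by (intro polyhedron_Inter) auto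
qed

lemma bounded_refinement_cell: "finite A \<Longrightarrow> D \<in> refinement_cells A \<Longrightarrow> bounded D"
  by (meson bounded_subset finite_imp_bounded_convex_hull refinement_cell_subset_convex_hull)

lemma face_of_Inter_subset_facet:
  fixes \<G> :: "'a::euclidean_space set set"
  assumes "finite \<G>" "\<And>P. P \<in> \<G> \<Longrightarrow> polyhedron P"
    and "\<Gamma> face_of \<Inter>\<G>" "\<Gamma> \<noteq> {}" "\<Gamma> \<noteq> \<Inter>\<G>"
  obtains P F where "P \<in> \<G>" "F facet_of P" "\<Gamma> \<subseteq> F"
proof -
  have "convex \<Gamma>" using assms(3) face_of_imp_convex by blast
  then obtain x where x: "x \<in> rel_interior \<Gamma>" using assms(4) rel_interior_eq_empty by blast
  have x\<Gamma>: "x \<in> \<Gamma>" using x rel_interior_subset by blast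
  have "x \<notin> rel_interior (\<Inter>\<G>)"
    using face_of_disjoint_rel_interior[OF assms(3,5)] x\<Gamma> by blast
  then obtain P where P: "P \<in> \<G>" "x \<notin> rel_interior P"
    using convex_rel_interior_finite_Inter[OF _ _ assms(1)] assms(2) polyhedron_imp_convex
    by (metis (no_types, lifting) INT_I empty_iff)
  have "x \<in> P" using x\<Gamma> assms(3) P(1) face_of_imp_subset by blast
  then have "x \<in> rel_frontier P" using P(2) closure_subset unfolding rel_frontier_def by blast
  then obtain F where F: "F facet_of P" "x \<in> F"
    using rel_frontier_of_polyhedron[OF assms(2)[OF P(1)]] by blast
  obtain u c where uc: "P \<subseteq> {y. u \<bullet> y \<le> c}" "F = P \<inter> {y. u \<bullet> y = c}"
    using facet_of_polyhedron[OF assms(2)[OF P(1)] F(1)] by blast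
  have "\<Inter>\<G> \<inter> {y. u \<bullet> y = c} face_of \<Inter>\<G>"
    using uc(1) P(1) assms(2) polyhedron_imp_convex
    by (intro face_of_Int_supporting_hyperplane_le convex_Inter) blast+
  moreover have "\<Gamma> \<subseteq> \<Inter>\<G>" using assms(3) face_of_imp_subset by blast
  moreover have "x \<in> \<Inter>\<G> \<inter> {y. u \<bullet> y = c}" using x\<Gamma> F(2) uc(2) \<open>\<Gamma> \<subseteq> \<Inter>\<G>\<close> by blast
  ultimately have "\<Gamma> \<subseteq> \<Inter>\<G> \<inter> {y. u \<bullet> y = c}" using x subset_of_face_of by blast
  then show ?thesis using that P(1) F(1) uc(2) by blast
qed

lemma facet_of_Int_supporting_hyperplane:
  fixes D \<Delta> \<Gamma> :: "'a::euclidean_space set"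
  assumes "convex \<Delta>" "\<Delta> \<subseteq> {x. u \<bullet> x \<le> c}" "\<Gamma> facet_of D" "\<Gamma> \<subseteq> {x. u \<bullet> x = c}"
    and "D \<subseteq> \<Delta>" "aff_dim D = aff_dim \<Delta>" "\<not> D \<subseteq> {x. u \<bullet> x = c}"
  shows "\<Delta> \<inter> {x. u \<bullet> x = c} facet_of \<Delta>"
proof -
  let ?H = "{x. u \<bullet> x = c}"
  have face: "\<Delta> \<inter> ?H face_of \<Delta>"
    using assms(1,2) by (blast intro: face_of_Int_supporting_hyperplane_le)
  have "\<Gamma> \<subseteq> \<Delta> \<inter> ?H" using assms(3-5) facet_of_imp_subset by blast
  moreover have "\<Delta> \<inter> ?H \<noteq> \<Delta>" using assms(5,7) by blast
  then have "aff_dim (\<Delta> \<inter> ?H) < aff_dim \<Delta>" using face_of_aff_dim_lt[OF assms(1) face] by simp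
  ultimately show ?thesis
    using face assms(3,6) aff_dim_subset[of \<Gamma> "\<Delta> \<inter> ?H"] unfolding facet_of_def by auto
qed

lemma facet_of_rel_interior_superset:
  fixes D \<Delta> \<Gamma> :: "'a::euclidean_space set"
  assumes "polyhedron D" "bounded D" "polyhedron \<Delta>"
    and "rel_interior D \<subseteq> rel_interior \<Delta>" "aff_dim D = aff_dim \<Delta>" "\<Gamma> facet_of \<Delta>"
  obtains F where "F facet_of D" "D \<inter> \<Gamma> \<subseteq> F"
proof -
  obtain u c where uc: "\<Delta> \<subseteq> {x. u \<bullet> x \<le> c}" "\<Gamma> = \<Delta> \<inter> {x. u \<bullet> x = c}"
    using facet_of_polyhedron[OF assms(3,6)] by blast
  have "convex D" using assms(1) polyhedron_imp_convex by blast
  have "D \<subseteq> closure (rel_interior D)"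
    using \<open>convex D\<close> by (simp add: convex_closure_rel_interior closure_subset)
  also have "\<dots> \<subseteq> \<Delta>"
    using assms(3,4) rel_interior_subset closure_minimal polyhedron_imp_closed by (metis order_trans)
  finally have "D \<subseteq> \<Delta>" .
  define T where "T = D \<inter> {x. u \<bullet> x = c}"
  have T: "T face_of D" "D \<inter> \<Gamma> = T"
    unfolding T_def uc(2) using \<open>convex D\<close> \<open>D \<subseteq> \<Delta>\<close> uc(1)
    by (auto intro: face_of_Int_supporting_hyperplane_le)
  have "\<Gamma> \<noteq> {}" using assms(6) unfolding facet_of_def by blast
  then have "D \<noteq> {}" using assms(5) facet_of_imp_subset[OF assms(6)] by (metis aff_dim_empty subset_empty)
  then obtain z where z: "z \<in> rel_interior D" using \<open>convex D\<close> rel_interior_eq_empty by blast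
  have "\<Gamma> \<inter> rel_interior \<Delta> = {}"
    using assms(6) face_of_disjoint_rel_interior facet_of_irrefl unfolding facet_of_def by blast
  then have "T \<noteq> D" using z assms(4) rel_interior_subset \<open>D \<subseteq> \<Delta>\<close> unfolding T_def uc(2) by blast
  show ?thesis
  proof (cases "T = {}")
    case False
    then show ?thesis
      using face_of_polyhedron_subset_facet[OF assms(1) T(1) False \<open>T \<noteq> D\<close>] that T(2) by metis
  next
    case True
    have "\<not> affine D"
    proof
      assume "affine D"
      then obtain a where "D = {a}" using assms(2) \<open>D \<noteq> {}\<close> affine_bounded_eq_trivial by blast
      then have "aff_dim \<Gamma> = -1" using assms(5,6) unfolding facet_of_def by simp
      then show False using \<open>\<Gamma> \<noteq> {}\<close> by (metis aff_dim_empty)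
    qed
    then obtain F where "F facet_of D"
      using rel_frontier_of_polyhedron[OF assms(1)] rel_frontier_eq_empty[of D] by auto
    then show ?thesis using that True T(2) by blast
  qed
qed

lemma abs_convex_combination_le:
  assumes "\<And>a. a \<in> T \<Longrightarrow> 0 \<le> p a" "sum p T = 1" "\<And>a. a \<in> T \<Longrightarrow> \<bar>f a\<bar> \<le> B"
  shows "\<bar>\<Sum>a\<in>T. p a * f a\<bar> \<le> (B::real)"
proof -
  have "\<bar>\<Sum>a\<in>T. p a * f a\<bar> \<le> (\<Sum>a\<in>T. p a * B)"
    using assms(1,3) by (intro order_trans[OF sum_abs sum_mono]) (simp add: abs_mult mult_left_mono)
  also have "\<dots> = B" using assms(2) by (simp add: sum_distrib_right[symmetric])
  finally show ?thesis .
qed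

lemma rel_interior_convex_hull_weights:
  fixes T :: "'a::euclidean_space set"
  assumes "finite T" "z \<in> rel_interior (convex hull T)"
  shows "\<exists>u. (\<forall>b\<in>T. 0 < u b) \<and> sum u T = 1 \<and> (\<Sum>b\<in>T. u b *\<^sub>R b) = z"
  using assms rel_interior_convex_hull_union[where S="\<lambda>x. {x}" and I=T] by auto

lemma uniform_rel_interior_weights:
  fixes A :: "'a::euclidean_space set"
  assumes "finite A"
  shows "\<exists>\<delta>>0. \<forall>T\<subseteq>A. z \<in> rel_interior (convex hull T) \<longrightarrow>
           (\<exists>u. (\<forall>b\<in>T. \<delta> \<le> u b) \<and> sum u T = 1 \<and> (\<Sum>b\<in>T. u b *\<^sub>R b) = z)"
proof -
  let ?P = "\<lambda>\<delta> T. z \<in> rel_interior (convex hull T) \<longrightarrow>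
    (\<exists>u. (\<forall>b\<in>T. \<delta> \<le> u b) \<and> sum u T = 1 \<and> (\<Sum>b\<in>T. u b *\<^sub>R b) = z)"
  have ev: "eventually (\<lambda>\<delta>. ?P \<delta> T) (at_right 0)" if "T \<in> Pow A" for T
  proof (cases "z \<in> rel_interior (convex hull T)")
    case True
    have "finite T" using that assms finite_subset by blast
    then obtain u where u: "\<forall>b\<in>T. 0 < u b" "sum u T = 1" "(\<Sum>b\<in>T. u b *\<^sub>R b) = z"
      using True rel_interior_convex_hull_weights by blast
    have "T \<noteq> {}" using True by auto
    then have "Min (u ` T) > 0" using \<open>finite T\<close> u(1) by simp
    then have "eventually (\<lambda>\<delta>. \<delta> < Min (u ` T)) (at_right 0)"
      unfolding eventually_at_right_field by blast
    moreover have "?P \<delta> T" if "\<delta> < Min (u ` T)" for \<delta>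
    proof -
      have "\<delta> \<le> u b" if "b \<in> T" for b
        using \<open>\<delta> < Min (u ` T)\<close> Min_le[OF finite_imageI[OF \<open>finite T\<close>] imageI[OF that], of u] by linarith
      then show ?thesis using u(2,3) by blast
    qed
    ultimately show ?thesis by (rule eventually_mono)
  qed simp
  have "eventually (\<lambda>\<delta>. \<forall>T\<in>Pow A. ?P \<delta> T) (at_right 0)"
    by (rule eventually_ball_finite) (use assms ev in blast)+
  moreover have "eventually (\<lambda>\<delta>. 0 < \<delta>) (at_right (0::real))"
    by (rule eventually_at_right_less)
  ultimately have "eventually (\<lambda>\<delta>. (\<forall>T\<in>Pow A. ?P \<delta> T) \<and> 0 < \<delta>) (at_right 0)"
    by (rule eventually_conj)
  then obtain \<delta> where "\<forall>T\<in>Pow A. ?P \<delta> T" "0 < \<delta>"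
    using eventually_happens'[OF trivial_limit_at_right_real] by blast
  then show ?thesis by blast
qed

lemma weighted_sum_lt_imp_lt:
  fixes q f :: "'a \<Rightarrow> real"
  assumes "finite S" "b \<in> S" "0 \<le> \<delta>" "\<forall>a\<in>S. \<delta> \<le> q a \<and> 0 \<le> f a"
    and "(\<Sum>a\<in>S. q a * f a) < \<delta> * m"
  shows "f b < m"
proof (rule ccontr)
  assume "\<not> f b < m"
  then have "\<delta> * m \<le> \<delta> * f b"
    using assms(3) by (intro mult_left_mono) auto
  also have "\<dots> \<le> q b * f b"
    using assms(2,4) by (intro mult_right_mono) auto
  also have "\<dots> \<le> (\<Sum>a\<in>S. q a * f a)"
    using assms(1-4) by (intro member_le_sum) auto
  finally show False using assms(5) by simp
qed

(* S0 is a lower face for the heights h0 and S one for h, and z lies in both convex hulls: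
   comparing the two barycentric representations of z bounds the h0-excess of S by the
   perturbation h - h0. *)
lemma lower_face_comparison:
  fixes z w w0 :: "'a::real_inner"
  assumes S0: "\<And>a. a \<in> S0 \<Longrightarrow> \<beta> \<le> h a + w \<bullet> a \<and> h0 a + w0 \<bullet> a = \<beta>0"
    and S: "\<And>b. b \<in> S \<Longrightarrow> h b + w \<bullet> b = \<beta>"
    and p: "\<And>a. a \<in> S0 \<Longrightarrow> 0 \<le> p a" "sum p S0 = 1" "(\<Sum>a\<in>S0. p a *\<^sub>R a) = z"
    and q: "sum q S = 1" "(\<Sum>b\<in>S. q b *\<^sub>R b) = z"
  shows "(\<Sum>b\<in>S. q b * (h0 b + w0 \<bullet> b - \<beta>0))
    \<le> (\<Sum>a\<in>S0. p a * (h a - h0 a)) - (\<Sum>b\<in>S. q b * (h b - h0 b))"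
proof -
  have "0 \<le> (\<Sum>a\<in>S0. p a * (h a + w \<bullet> a + - \<beta>))"
    using S0 p(1) by (intro sum_nonneg) simp
  then have h_S0: "0 \<le> (\<Sum>a\<in>S0. p a * h a) + w \<bullet> z - \<beta>"
    unfolding sum_mult_affine using p(2,3) by simp
  have "(\<Sum>b\<in>S. q b * (h b + w \<bullet> b + - \<beta>)) = 0"
    using S by simp
  then have h_S: "(\<Sum>b\<in>S. q b * h b) + w \<bullet> z - \<beta> = 0"
    unfolding sum_mult_affine using q by simp
  have "(\<Sum>a\<in>S0. p a * (h0 a + w0 \<bullet> a + - \<beta>0)) = 0"
    using S0 by simp
  then have h0_S0: "(\<Sum>a\<in>S0. p a * h0 a) + w0 \<bullet> z - \<beta>0 = 0"
    unfolding sum_mult_affine using p(2,3) by simp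
  have h0_S: "(\<Sum>b\<in>S. q b * (h0 b + w0 \<bullet> b + - \<beta>0)) = (\<Sum>b\<in>S. q b * h0 b) + w0 \<bullet> z - \<beta>0"
    unfolding sum_mult_affine using q by simp
  show ?thesis
    using h_S0 h_S h0_S0 h0_S by (simp add: right_diff_distrib sum_subtractf)
qed

lemma lower_face_subset_of_small_perturbation:
  fixes A :: "'a::real_inner set" and h0 g :: "'a \<Rightarrow> real" and w0 w :: 'a
    and \<beta>0 \<beta> \<epsilon> :: real
  defines "S0 \<equiv> {a\<in>A. h0 a + w0 \<bullet> a = \<beta>0}" and "S \<equiv> {a\<in>A. h0 a + \<epsilon> * g a + w \<bullet> a = \<beta>}"
  assumes fin: "finite A"
    and low0: "\<forall>a\<in>A. \<beta>0 \<le> h0 a + w0 \<bullet> a" and low: "\<forall>a\<in>A. \<beta> \<le> h0 a + \<epsilon> * g a + w \<bullet> a"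
    and p: "\<forall>a\<in>S0. 0 \<le> p a" "sum p S0 = 1" "(\<Sum>a\<in>S0. p a *\<^sub>R a) = z"
    and q: "\<forall>b\<in>S. \<delta> \<le> q b" "sum q S = 1" "(\<Sum>b\<in>S. q b *\<^sub>R b) = z"
    and gB: "\<forall>a\<in>A. \<bar>g a\<bar> \<le> B" and m: "\<forall>a\<in>A - S0. m \<le> h0 a + w0 \<bullet> a - \<beta>0"
    and "0 < \<delta>" "0 < \<epsilon>" "\<epsilon> * (2 * B) < \<delta> * m"
  shows "S \<subseteq> S0"
proof
  define \<psi> where "\<psi> a = h0 a + w0 \<bullet> a - \<beta>0" for a
  have "S \<subseteq> A" "finite S" using fin unfolding S_def by auto
  have q_nonneg: "\<forall>b\<in>S. 0 \<le> q b" using q(1) \<open>0 < \<delta>\<close> by force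
  have "(\<Sum>b\<in>S. q b * \<psi> b)
      \<le> (\<Sum>a\<in>S0. p a * ((h0 a + \<epsilon> * g a) - h0 a))
        - (\<Sum>b\<in>S. q b * ((h0 b + \<epsilon> * g b) - h0 b))"
    unfolding \<psi>_def
  proof (rule lower_face_comparison[where h = "\<lambda>a. h0 a + \<epsilon> * g a" and z = z])
    show "\<beta> \<le> h0 a + \<epsilon> * g a + w \<bullet> a \<and> h0 a + w0 \<bullet> a = \<beta>0" if "a \<in> S0" for a
      using low that unfolding S0_def by auto
    show "h0 b + \<epsilon> * g b + w \<bullet> b = \<beta>" if "b \<in> S" for b
      using that unfolding S_def by blast
  qed (use p q in auto)
  also have "\<dots> = \<epsilon> * ((\<Sum>a\<in>S0. p a * g a) - (\<Sum>b\<in>S. q b * g b))"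
    by (simp add: sum_distrib_left right_diff_distrib algebra_simps)
  also have "\<dots> \<le> \<epsilon> * (2 * B)"
  proof -
    have "\<bar>\<Sum>a\<in>S0. p a * g a\<bar> \<le> B"
      using p gB unfolding S0_def by (intro abs_convex_combination_le) auto
    moreover have "\<bar>\<Sum>b\<in>S. q b * g b\<bar> \<le> B"
      using q_nonneg q(2) gB \<open>S \<subseteq> A\<close> by (intro abs_convex_combination_le) auto
    ultimately show ?thesis using \<open>0 < \<epsilon>\<close> by (intro mult_left_mono) auto
  qed
  also have "\<dots> < \<delta> * m" by fact
  finally have small: "(\<Sum>b\<in>S. q b * \<psi> b) < \<delta> * m" .
  fix b assume "b \<in> S"
  have "\<forall>a\<in>S. \<delta> \<le> q a \<and> 0 \<le> \<psi> a"
    using q(1) low0 \<open>S \<subseteq> A\<close> unfolding \<psi>_def by fastforce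
  then have "\<psi> b < m"
    using \<open>finite S\<close> \<open>b \<in> S\<close> \<open>0 < \<delta>\<close> small by (intro weighted_sum_lt_imp_lt[of S b \<delta> q \<psi> m]) auto
  then show "b \<in> S0"
    using m \<open>b \<in> S\<close> \<open>S \<subseteq> A\<close> unfolding \<psi>_def by (meson DiffI not_less subsetD)
qed

lemma perturbed_lower_face_subset:
  fixes A :: "'a::euclidean_space set" and h0 g :: "'a \<Rightarrow> real"
  assumes "finite A" "\<forall>a\<in>A. \<beta>0 \<le> h0 a + w0 \<bullet> a"
    and "z \<in> convex hull {a\<in>A. h0 a + w0 \<bullet> a = \<beta>0}"
  shows "\<exists>\<epsilon>>0. \<forall>w \<beta>. (\<forall>a\<in>A. \<beta> \<le> h0 a + \<epsilon> * g a + w \<bullet> a) \<longrightarrow>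
           z \<in> rel_interior (convex hull {a\<in>A. h0 a + \<epsilon> * g a + w \<bullet> a = \<beta>}) \<longrightarrow>
           {a\<in>A. h0 a + \<epsilon> * g a + w \<bullet> a = \<beta>} \<subseteq> {a\<in>A. h0 a + w0 \<bullet> a = \<beta>0}"
proof -
  define S0 where "S0 = {a\<in>A. h0 a + w0 \<bullet> a = \<beta>0}"
  define \<psi> where "\<psi> a = h0 a + w0 \<bullet> a - \<beta>0" for a
  have "finite S0" using assms(1) unfolding S0_def by simp
  then obtain p where p: "\<forall>a\<in>S0. 0 \<le> p a" "sum p S0 = 1" "(\<Sum>a\<in>S0. p a *\<^sub>R a) = z"
    using assms(3)[folded S0_def] convex_hull_finite by blast
  define B where "B = (\<Sum>a\<in>A. \<bar>g a\<bar>)"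
  have gB: "\<forall>a\<in>A. \<bar>g a\<bar> \<le> B"
    unfolding B_def using assms(1) by (auto intro: member_le_sum)
  have "0 \<le> B" unfolding B_def by (simp add: sum_nonneg)
  define m where "m = Min (insert 1 (\<psi> ` (A - S0)))"
  have "0 < \<psi> a" if "a \<in> A - S0" for a
    using assms(2) that unfolding \<psi>_def S0_def by fastforce
  then have m: "0 < m" "\<forall>a\<in>A - S0. m \<le> \<psi> a"
    unfolding m_def using assms(1) by auto
  obtain \<delta> where \<delta>: "0 < \<delta>" "\<forall>T\<subseteq>A. z \<in> rel_interior (convex hull T) \<longrightarrow>
      (\<exists>u. (\<forall>b\<in>T. \<delta> \<le> u b) \<and> sum u T = 1 \<and> (\<Sum>b\<in>T. u b *\<^sub>R b) = z)"
    using uniform_rel_interior_weights[OF assms(1)] by blast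
  define \<epsilon> where "\<epsilon> = \<delta> * m / (2 * B + 1)"
  have "0 < \<epsilon>" unfolding \<epsilon>_def using \<delta>(1) m(1) \<open>0 \<le> B\<close> by simp
  have "\<epsilon> * (2 * B) < \<delta> * m"
    using \<open>0 < \<epsilon>\<close> \<open>0 \<le> B\<close> unfolding \<epsilon>_def by (simp add: field_simps)
  have "{a\<in>A. h0 a + \<epsilon> * g a + w \<bullet> a = \<beta>} \<subseteq> S0"
    if low: "\<forall>a\<in>A. \<beta> \<le> h0 a + \<epsilon> * g a + w \<bullet> a"
      and z: "z \<in> rel_interior (convex hull {a\<in>A. h0 a + \<epsilon> * g a + w \<bullet> a = \<beta>})"
    for w \<beta>
  proof -
    define S where "S = {a\<in>A. h0 a + \<epsilon> * g a + w \<bullet> a = \<beta>}"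
    have "S \<subseteq> A" unfolding S_def by blast
    then obtain q where q: "\<forall>b\<in>S. \<delta> \<le> q b" "sum q S = 1" "(\<Sum>b\<in>S. q b *\<^sub>R b) = z"
      using \<delta>(2) z[folded S_def] by blast
    show ?thesis
      using lower_face_subset_of_small_perturbation[OF assms(1,2) low p[unfolded S0_def]
          q[unfolded S_def] gB m(2)[unfolded S0_def \<psi>_def] \<delta>(1) \<open>0 < \<epsilon>\<close> \<open>\<epsilon> * (2 * B) < \<delta> * m\<close>]
      unfolding S0_def .
  qed
  then show ?thesis using \<open>0 < \<epsilon>\<close> unfolding S0_def by blast
qed

lemma refinement_cell_subset_simplex:
  fixes A D :: "'a::euclidean_space set"
  assumes "finite A" "\<And>h. reg_cell A h (G h)" "D = \<Inter>(range G)" "D \<noteq> {}"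
    and "aff_dim D = aff_dim (convex hull A)"
  obtains S where "S \<subseteq> A" "\<not> affine_dependent S" "convex hull S \<subseteq> G h0" "D \<subseteq> convex hull S"
    "rel_interior D \<subseteq> rel_interior (convex hull S)"
proof -
  have DG: "D \<subseteq> G h" for h using assms(3) by blast
  have dim_G: "aff_dim (G h) = aff_dim D" for h
    using aff_dim_subset[OF DG] aff_dim_subset[OF reg_cell_subset_convex_hull[OF assms(2)]] assms(5)
    by (metis order_antisym)
  obtain w0 \<beta>0 where r0: "\<forall>a\<in>A. \<beta>0 \<le> h0 a + w0 \<bullet> a"
    "G h0 = convex hull {a\<in>A. h0 a + w0 \<bullet> a = \<beta>0}"
    using assms(2)[of h0] unfolding reg_cell_def by blast
  have "convex D" unfolding assms(3)
    using assms(2) by (intro convex_INT) (metis reg_cell_convex_hull convex_convex_hull)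
  then obtain z where z: "z \<in> rel_interior D" using assms(4) rel_interior_eq_empty by blast
  then have z0: "z \<in> convex hull {a\<in>A. h0 a + w0 \<bullet> a = \<beta>0}"
    using DG r0(2) rel_interior_subset by blast
  obtain g where g: "\<And>T w \<beta>. T \<subseteq> A \<Longrightarrow> \<forall>a\<in>T. g a + w \<bullet> a = \<beta> \<Longrightarrow> \<not> affine_dependent T"
    using exists_generic_height[OF assms(1)] by blast
  obtain \<epsilon> where "0 < \<epsilon>" and \<epsilon>: "\<forall>w \<beta>. (\<forall>a\<in>A. \<beta> \<le> h0 a + \<epsilon> * g a + w \<bullet> a) \<longrightarrow>
      z \<in> rel_interior (convex hull {a\<in>A. h0 a + \<epsilon> * g a + w \<bullet> a = \<beta>}) \<longrightarrow>
      {a\<in>A. h0 a + \<epsilon> * g a + w \<bullet> a = \<beta>} \<subseteq> {a\<in>A. h0 a + w0 \<bullet> a = \<beta>0}"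
    using perturbed_lower_face_subset[OF assms(1) r0(1) z0] by blast
  define h where "h a = h0 a + \<epsilon> * g a" for a
  obtain w \<beta> where r: "\<forall>a\<in>A. \<beta> \<le> h a + w \<bullet> a" "G h = convex hull {a\<in>A. h a + w \<bullet> a = \<beta>}"
    using assms(2)[of h] unfolding reg_cell_def by blast
  define S where "S = {a\<in>A. h a + w \<bullet> a = \<beta>}"
  have "D \<subseteq> convex hull S" "aff_dim D = aff_dim (convex hull S)"
    using DG[of h] dim_G[of h] r(2) unfolding S_def by auto
  then have relint: "rel_interior D \<subseteq> rel_interior (convex hull S)"
    by (metis aff_dim_eq_full_gen subset_rel_interior)
  then have S0: "S \<subseteq> {a\<in>A. h0 a + w0 \<bullet> a = \<beta>0}"
    using \<epsilon> r(1) z unfolding S_def h_def by blast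
  \<comment> \<open>On S both h and h0 agree with affine functions, hence so does g.\<close>
  have "\<forall>a\<in>S. g a + ((1 / \<epsilon>) *\<^sub>R (w - w0)) \<bullet> a = (\<beta> - \<beta>0) / \<epsilon>"
  proof
    fix a assume "a \<in> S"
    then have "\<epsilon> * g a + (w - w0) \<bullet> a = \<beta> - \<beta>0"
      using S0 unfolding S_def h_def by (force simp: inner_diff_left)
    moreover have "((1 / \<epsilon>) *\<^sub>R (w - w0)) \<bullet> a = ((w - w0) \<bullet> a) / \<epsilon>" by simp
    ultimately show "g a + ((1 / \<epsilon>) *\<^sub>R (w - w0)) \<bullet> a = (\<beta> - \<beta>0) / \<epsilon>"
      using \<open>0 < \<epsilon>\<close> by (simp add: field_simps del: inner_scaleR_left)
  qed
  moreover have "S \<subseteq> A" unfolding S_def by blast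
  ultimately have "\<not> affine_dependent S" by (rule g[rotated])
  moreover have "convex hull S \<subseteq> G h0"
    using S0 r0(2) by (simp add: hull_mono)
  ultimately show ?thesis
    using that \<open>S \<subseteq> A\<close> \<open>D \<subseteq> convex hull S\<close> relint by blast
qed

lemma refinement_cell_facet_subset_facet:
  fixes A D \<Gamma> :: "'a::euclidean_space set"
  assumes "finite A" "\<And>h. reg_cell A h (G h)" "D = \<Inter>(range G)" "\<Gamma> facet_of D"
  obtains h0 F where "F facet_of G h0" "\<Gamma> \<subseteq> F"
proof -
  have "finite (range G)" using assms(1,2) by (rule finite_range_reg_cells)
  moreover have "\<And>P. P \<in> range G \<Longrightarrow> polyhedron P"
    using polyhedron_reg_cell[OF assms(1,2)] by blast
  moreover have "\<Gamma> face_of \<Inter>(range G)" "\<Gamma> \<noteq> {}" "\<Gamma> \<noteq> \<Inter>(range G)"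
    using assms(3,4) unfolding facet_of_def by auto
  ultimately obtain P F where "P \<in> range G" "F facet_of P" "\<Gamma> \<subseteq> F"
    by (rule face_of_Inter_subset_facet)
  then show ?thesis using that by blast
qed

lemma refinement_cell_facet_imp_Lambda_facet:
  fixes A D \<Gamma> :: "'a::euclidean_space set"
  assumes "finite A" "D \<in> refinement_cells A" "aff_dim D = aff_dim (convex hull A)"
    and "\<Gamma> facet_of D"
  shows "\<exists>\<Delta>\<in>Lambda A D (aff_dim D). \<exists>\<Gamma>'. \<Gamma>' facet_of \<Delta> \<and> \<Gamma> \<subseteq> \<Gamma>'"
proof -
  obtain G where G: "\<And>h. reg_cell A h (G h)" "D = \<Inter>(range G)" "D \<noteq> {}"
    using assms(2) by (blast elim: refinement_cellE)
  obtain h0 F where F: "F facet_of G h0" "\<Gamma> \<subseteq> F"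
    using refinement_cell_facet_subset_facet[OF assms(1) G(1,2) assms(4)] by blast
  obtain u c where uc: "G h0 \<subseteq> {x. u \<bullet> x \<le> c}" "F = G h0 \<inter> {x. u \<bullet> x = c}"
    using facet_of_polyhedron[OF polyhedron_reg_cell[OF assms(1) G(1)] F(1)] by blast
  obtain S where S: "S \<subseteq> A" "\<not> affine_dependent S" "convex hull S \<subseteq> G h0"
    "D \<subseteq> convex hull S" "rel_interior D \<subseteq> rel_interior (convex hull S)"
    using refinement_cell_subset_simplex[OF assms(1) G assms(3)] by blast
  have dim_S: "aff_dim (convex hull S) = aff_dim D"
    using aff_dim_subset[OF S(4)] aff_dim_subset[OF S(3)]
      aff_dim_subset[OF reg_cell_subset_convex_hull[OF G(1)], of h0] assms(3)
    by linarith
  then have "int (card S) = aff_dim D + 1"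
    using aff_dim_affine_independent[OF S(2)] by (simp add: aff_dim_convex_hull)
  then have "convex hull S \<in> Lambda A D (aff_dim D)"
    unfolding Lambda_def using S(1,2,5) by blast
  moreover have "\<not> D \<subseteq> {x. u \<bullet> x = c}"
  proof
    assume "D \<subseteq> {x. u \<bullet> x = c}"
    then have "aff_dim D \<le> aff_dim F" using G(2) uc(2) by (intro aff_dim_subset) blast
    moreover have "aff_dim F < aff_dim (G h0)" using F(1) unfolding facet_of_def by simp
    moreover have "aff_dim (G h0) \<le> aff_dim D"
      using aff_dim_subset[OF reg_cell_subset_convex_hull[OF G(1)]] assms(3) by simp
    ultimately show False by simp
  qed
  then have "convex hull S \<inter> {x. u \<bullet> x = c} facet_of convex hull S"
    using uc F S(3)
    by (intro facet_of_Int_supporting_hyperplane[OF convex_convex_hull _ assms(4) _ S(4) dim_S[symmetric]])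
      auto
  moreover have "\<Gamma> \<subseteq> convex hull S \<inter> {x. u \<bullet> x = c}"
    using F(2) uc(2) S(4) assms(4) facet_of_imp_subset by blast
  ultimately show ?thesis by blast
qed

lemma Lambda_facet_imp_refinement_cell_facet:
  fixes A D \<Delta> \<Gamma> :: "'a::euclidean_space set"
  assumes "finite A" "D \<in> refinement_cells A" "\<Delta> \<in> Lambda A D (aff_dim D)" "\<Gamma> facet_of \<Delta>"
  obtains F where "F facet_of D" "D \<inter> \<Gamma> \<subseteq> F"
proof -
  obtain C where C: "C \<subseteq> A" "\<not> affine_dependent C" "int (card C) = aff_dim D + 1" "\<Delta> = convex hull C"
    and relint: "rel_interior D \<subseteq> rel_interior \<Delta>"
    using assms(3) unfolding Lambda_def by blast
  have "finite C" using C(1) assms(1) finite_subset by blast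
  have "polyhedron \<Delta>" using C(4) polyhedron_convex_hull[OF \<open>finite C\<close>] by simp
  moreover have "aff_dim D = aff_dim \<Delta>"
    using C aff_dim_affine_independent[OF C(2)] by (simp add: aff_dim_convex_hull)
  ultimately obtain F where "F facet_of D" "D \<inter> \<Gamma> \<subseteq> F"
    using facet_of_rel_interior_superset[OF polyhedron_refinement_cell[OF assms(1,2)]
        bounded_refinement_cell[OF assms(1,2)] _ relint _ assms(4)] by blast
  then show ?thesis by (rule that)
qed

theorem lemma3p2:
  fixes Ap Am D :: "'a::euclidean_space set"
  assumes "finite Ap" and "finite Am" and "Ap \<inter> Am = {}"
    and "nonseparable Ap Am"
    and "D \<in> Fd Ap (pair_dim Ap Am)" and "Am \<subseteq> D"
  shows "(\<exists>\<Gamma>. \<Gamma> facet_of D \<and> Am \<subseteq> \<Gamma>) \<longleftrightarrow>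
         (\<exists>\<Delta> \<in> Lambda Ap D (pair_dim Ap Am). \<exists>\<Gamma>. \<Gamma> facet_of \<Delta> \<and> Am \<subseteq> \<Gamma>)"
proof -
  have D: "D \<in> refinement_cells Ap" and dim_D: "aff_dim D = pair_dim Ap Am"
    using assms(5) unfolding Fd_def by auto
  have "aff_dim D \<le> aff_dim (convex hull Ap)"
    using D by (intro aff_dim_subset refinement_cell_subset_convex_hull)
  moreover have "aff_dim (convex hull Ap) \<le> pair_dim Ap Am"
    unfolding pair_dim_def by (intro aff_dim_subset hull_mono) blast
  ultimately have dim_hull: "aff_dim D = aff_dim (convex hull Ap)" using dim_D by simp
  show ?thesis
    unfolding dim_D[symmetric]
  proof
    assume "\<exists>\<Gamma>. \<Gamma> facet_of D \<and> Am \<subseteq> \<Gamma>"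
    then obtain \<Gamma> where "\<Gamma> facet_of D" "Am \<subseteq> \<Gamma>" by blast
    then show "\<exists>\<Delta> \<in> Lambda Ap D (aff_dim D). \<exists>\<Gamma>. \<Gamma> facet_of \<Delta> \<and> Am \<subseteq> \<Gamma>"
      using refinement_cell_facet_imp_Lambda_facet[OF assms(1) D dim_hull, of \<Gamma>] by blast
  next
    assume "\<exists>\<Delta> \<in> Lambda Ap D (aff_dim D). \<exists>\<Gamma>. \<Gamma> facet_of \<Delta> \<and> Am \<subseteq> \<Gamma>"
    then obtain \<Delta> \<Gamma> where "\<Delta> \<in> Lambda Ap D (aff_dim D)" "\<Gamma> facet_of \<Delta>" "Am \<subseteq> \<Gamma>" by blast
    moreover obtain F where "F facet_of D" "D \<inter> \<Gamma> \<subseteq> F"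
      using Lambda_facet_imp_refinement_cell_facet[OF assms(1) D \<open>\<Delta> \<in> _\<close> \<open>\<Gamma> facet_of \<Delta>\<close>] .
    ultimately show "\<exists>\<Gamma>. \<Gamma> facet_of D \<and> Am \<subseteq> \<Gamma>" using assms(6) by blast
  qed
qed

end
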